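(* Let $\mathcal{V}$ be a finite set of nodes, $\mathcal{P}$ a finite set of labels, $\mathcal{E}$ a set of unordered pairs of nodes, and $\theta_{ip},\theta_{ij,pq}\in\mathbb{R}$ unary and pairwise potential values. For $\vec{y}\in\{0,1\}^{\mathcal{V}\times\mathcal{P}}$ and $\vec{\lambda}\in\mathbb{R}^{\mathcal{V}}$ let $$L(\vec{y},\vec{\lambda})=\sum_{i\in\mathcal{V}}\sum_{p\in\mathcal{P}}\theta_{ip}y_{ip}+\sum_{\{i,j\}\in\mathcal{E}}\sum_{p,q\in\mathcal{P}}\theta_{ij,pq}y_{ip}y_{jq}+\sum_{i\in\mathcal{V}}\lambda_i\Big(\sum_{p\in\mathcal{P}}y_{ip}-1\Big)$$ and $D(\vec{\lambda})=\min_{\vec{y}\in\{0,1\}^{\mathcal{V}\times\mathcal{P}}}L(\vec{y},\vec{\lambda})$. If $\vec{\lambda}^*$ is a maximum point of $D$ over $\mathbb{R}^{\mathcal{V}}$, then $\vec{\lambda}^*$ satisfies the weak agreement condition.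
   Context: For $\vec\lambda\in\mathbb{R}^{\mathcal V}$, $i\in\mathcal V$, $p\in\mathcal P$, define $Z_{ip}(\vec\lambda)=\{z\in\{0,1\}:\ \exists\,\vec y^{\vec\lambda}\in\operatorname{Argmin}_{\vec y\in\{0,1\}^{\mathcal V\times\mathcal P}}L(\vec y,\vec\lambda)\text{ with }y^{\vec\lambda}_{ip}=z\}$, i.e. the set of values the variable $y_{ip}$ takes among all minimizers of the Lagrangian. A point $\vec\lambda$ satisfies the weak agreement condition if for every node $i\in\mathcal V$: (1) there exists $p\in\mathcal P$ with $1\in Z_{ip}(\vec\lambda)$; and (2) for every $p\in\mathcal P$, if $Z_{ip}(\vec\lambda)=\{1\}$ then $0\in Z_{iq}(\vec\lambda)$ for all $q\ne p$. *)

theory Defs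
  imports Complex_Main
begin

text \<open>Binary labelings y in {0,1}^(V x P), represented as real-valued functions that
  are 0/1 on V x P and 0 outside (so the feasible set is in bijection with {0,1}^(V x P)).\<close>
definition Ybin :: "'v set \<Rightarrow> 'p set \<Rightarrow> ('v \<Rightarrow> 'p \<Rightarrow> real) set" where
  "Ybin V P = {y. \<forall>i p. (i \<in> V \<and> p \<in> P \<longrightarrow> y i p \<in> {0, 1})
                        \<and> (\<not> (i \<in> V \<and> p \<in> P) \<longrightarrow> y i p = 0)}"

text \<open>Lagrangian. Each unordered edge {i,j} is stored once as an ordered pair (i,j) in E.\<close>
definition Lagr :: "'v set \<Rightarrow> 'p set \<Rightarrow> ('v \<times> 'v) set \<Rightarrow> ('v \<Rightarrow> 'p \<Rightarrow> real)
      \<Rightarrow> ('v \<Rightarrow> 'v \<Rightarrow> 'p \<Rightarrow> 'p \<Rightarrow> real) \<Rightarrow> ('v \<Rightarrow> 'p \<Rightarrow> real) \<Rightarrow> ('v \<Rightarrow> real) \<Rightarrow> real" where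
  "Lagr V P E th1 th2 y lam =
     (\<Sum>i\<in>V. \<Sum>p\<in>P. th1 i p * y i p)
   + (\<Sum>(i, j)\<in>E. \<Sum>p\<in>P. \<Sum>q\<in>P. th2 i j p q * y i p * y j q)
   + (\<Sum>i\<in>V. lam i * ((\<Sum>p\<in>P. y i p) - 1))"

definition Dual :: "'v set \<Rightarrow> 'p set \<Rightarrow> ('v \<times> 'v) set \<Rightarrow> ('v \<Rightarrow> 'p \<Rightarrow> real)
      \<Rightarrow> ('v \<Rightarrow> 'v \<Rightarrow> 'p \<Rightarrow> 'p \<Rightarrow> real) \<Rightarrow> ('v \<Rightarrow> real) \<Rightarrow> real" where
  "Dual V P E th1 th2 lam = Min ((\<lambda>y. Lagr V P E th1 th2 y lam) ` Ybin V P)"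

definition ArgminL :: "'v set \<Rightarrow> 'p set \<Rightarrow> ('v \<times> 'v) set \<Rightarrow> ('v \<Rightarrow> 'p \<Rightarrow> real)
      \<Rightarrow> ('v \<Rightarrow> 'v \<Rightarrow> 'p \<Rightarrow> 'p \<Rightarrow> real) \<Rightarrow> ('v \<Rightarrow> real) \<Rightarrow> ('v \<Rightarrow> 'p \<Rightarrow> real) set" where
  "ArgminL V P E th1 th2 lam =
     {y \<in> Ybin V P. \<forall>y' \<in> Ybin V P. Lagr V P E th1 th2 y lam \<le> Lagr V P E th1 th2 y' lam}"

definition Zset :: "'v set \<Rightarrow> 'p set \<Rightarrow> ('v \<times> 'v) set \<Rightarrow> ('v \<Rightarrow> 'p \<Rightarrow> real)
      \<Rightarrow> ('v \<Rightarrow> 'v \<Rightarrow> 'p \<Rightarrow> 'p \<Rightarrow> real) \<Rightarrow> ('v \<Rightarrow> real) \<Rightarrow> 'v \<Rightarrow> 'p \<Rightarrow> real set" where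
  "Zset V P E th1 th2 lam i p =
     {z \<in> {0, 1}. \<exists>y \<in> ArgminL V P E th1 th2 lam. y i p = z}"

definition weak_agreement :: "'v set \<Rightarrow> 'p set \<Rightarrow> ('v \<times> 'v) set \<Rightarrow> ('v \<Rightarrow> 'p \<Rightarrow> real)
      \<Rightarrow> ('v \<Rightarrow> 'v \<Rightarrow> 'p \<Rightarrow> 'p \<Rightarrow> real) \<Rightarrow> ('v \<Rightarrow> real) \<Rightarrow> bool" where
  "weak_agreement V P E th1 th2 lam \<longleftrightarrow>
     (\<forall>i \<in> V.
        (\<exists>p \<in> P. 1 \<in> Zset V P E th1 th2 lam i p)
      \<and> (\<forall>p \<in> P. Zset V P E th1 th2 lam i p = {1} \<longrightarrow>
            (\<forall>q \<in> P. q \<noteq> p \<longrightarrow> 0 \<in> Zset V P E th1 th2 lam i q)))"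

end

theory Submission
  imports Defs "HOL-Library.FuncSet"
begin

text \<open>If some node i violated weak agreement at \<open>\<lambda>*\<close>, then every minimiser y of the
  Lagrangian would have \<open>\<Sum>\<^sub>p y\<^sub>i\<^sub>p - 1\<close> of one fixed strict sign d. Since the
  Lagrangian is affine in \<open>\<lambda>\<^sub>i\<close> with slope \<open>\<Sum>\<^sub>p y\<^sub>i\<^sub>p - 1\<close>, moving \<open>\<lambda>\<^sub>i\<close> a little in
  direction d raises the value at every minimiser, while the finitely many
  non-minimisers stay above the old minimum; so D would increase.\<close>

lemma Min_increases_along_minimiser_ascent:
  fixes f g :: "'a \<Rightarrow> real"
  assumes "finite Y" "Y \<noteq> {}"
    and ascent: "\<And>y. y \<in> Y \<Longrightarrow> f y = Min (f ` Y) \<Longrightarrow> 0 < g y"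
  shows "\<exists>t>0. Min (f ` Y) < Min ((\<lambda>y. f y + t * g y) ` Y)"
proof -
  let ?m = "Min (f ` Y)"
  have "\<forall>\<^sub>F t in at_right 0. ?m < f y + t * g y" if y: "y \<in> Y" for y
  proof (cases "f y = ?m")
    case True
    then show ?thesis
      using ascent[OF y] eventually_at_right_less[of 0]
      by (auto elim!: eventually_mono)
  next
    case False
    then have "?m < f y" using y assms(1) by (simp add: order_neq_le_trans)
    moreover have "((\<lambda>t. f y + t * g y) \<longlongrightarrow> f y + 0 * g y) (at_right 0)"
      by (intro tendsto_intros)
    ultimately show ?thesis using order_tendstoD(1) by fastforce
  qed
  then have "\<forall>\<^sub>F t in at_right 0. \<forall>y\<in>Y. ?m < f y + t * g y"
    by (simp add: eventually_ball_finite_distrib[OF assms(1)])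
  then have "\<forall>\<^sub>F t in at_right 0. 0 < t \<and> (\<forall>y\<in>Y. ?m < f y + t * g y)"
    using eventually_at_right_less[of 0] by (rule eventually_conj[rotated])
  then obtain t where "0 < t" "\<forall>y\<in>Y. ?m < f y + t * g y"
    using eventually_happens'[OF trivial_limit_at_right_real] by blast
  then show ?thesis using assms(1,2) by (auto simp: Min_gr_iff)
qed

lemma finite_Ybin:
  assumes "finite V" "finite P"
  shows "finite (Ybin V P)"
proof -
  let ?extend = "\<lambda>f i p. if i \<in> V \<and> p \<in> P then f (i, p) else 0"
  have "Ybin V P \<subseteq> ?extend ` ((V \<times> P) \<rightarrow>\<^sub>E {0, 1::real})"
  proof
    fix y assume y: "y \<in> Ybin V P"
    let ?f = "restrict (\<lambda>(i, p). y i p) (V \<times> P)"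
    have "?f \<in> (V \<times> P) \<rightarrow>\<^sub>E {0, 1}" "y = ?extend ?f"
      using y by (auto simp: Ybin_def fun_eq_iff)
    then show "y \<in> ?extend ` ((V \<times> P) \<rightarrow>\<^sub>E {0, 1})" by blast
  qed
  then show ?thesis
    by (rule finite_subset) (simp add: assms finite_PiE)
qed

lemma zero_in_Ybin: "(\<lambda>i p. 0) \<in> Ybin V P"
  by (simp add: Ybin_def)

lemma Ybin_value: "y \<in> Ybin V P \<Longrightarrow> i \<in> V \<Longrightarrow> p \<in> P \<Longrightarrow> y i p \<in> {0, 1}"
  by (simp add: Ybin_def)

lemma ArgminL_iff_attains_Dual:
  assumes "finite V" "finite P"
  shows "y \<in> ArgminL V P E th1 th2 lam \<longleftrightarrow>
           y \<in> Ybin V P \<and> Lagr V P E th1 th2 y lam = Dual V P E th1 th2 lam"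
proof -
  let ?L = "\<lambda>y. Lagr V P E th1 th2 y lam"
  have fin: "finite (?L ` Ybin V P)" and ne: "?L ` Ybin V P \<noteq> {}"
    using finite_Ybin[OF assms] zero_in_Ybin by auto
  show ?thesis
    unfolding ArgminL_def Dual_def
    using Min_in[OF fin ne] Min_le[OF fin] by (auto intro!: antisym)
qed

lemma Lagr_shift_multiplier:
  assumes "finite V" "i \<in> V"
  shows "Lagr V P E th1 th2 y (lam(i := lam i + t))
           = Lagr V P E th1 th2 y lam + t * ((\<Sum>p\<in>P. y i p) - 1)"
proof -
  have "(\<Sum>k\<in>V. (lam(i := lam i + t)) k * ((\<Sum>p\<in>P. y k p) - 1))
      = (\<Sum>k\<in>V. lam k * ((\<Sum>p\<in>P. y k p) - 1)
                 + (if k = i then t * ((\<Sum>p\<in>P. y k p) - 1) else 0))"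
    by (rule sum.cong) (auto simp: algebra_simps)
  also have "\<dots> = (\<Sum>k\<in>V. lam k * ((\<Sum>p\<in>P. y k p) - 1)) + t * ((\<Sum>p\<in>P. y i p) - 1)"
    using assms by (simp add: sum.distrib)
  finally show ?thesis by (simp add: Lagr_def)
qed

lemma Dual_maximiser_no_ascent_direction:
  assumes "finite V" "finite P" "i \<in> V"
    and max: "\<And>lam. Dual V P E th1 th2 lam \<le> Dual V P E th1 th2 lamstar"
  shows "\<exists>y \<in> ArgminL V P E th1 th2 lamstar. d * ((\<Sum>p\<in>P. y i p) - 1) \<le> 0"
proof (rule ccontr)
  define f where "f y = Lagr V P E th1 th2 y lamstar" for y
  define g where "g y = d * ((\<Sum>p\<in>P. y i p) - 1)" for y
  let ?Y = "Ybin V P"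
  assume "\<not> ?thesis"
  then have "0 < g y" if "y \<in> ?Y" "f y = Min (f ` ?Y)" for y
    using that ArgminL_iff_attains_Dual[OF assms(1,2)]
    unfolding f_def g_def Dual_def by (meson not_le)
  then obtain t where "Min (f ` ?Y) < Min ((\<lambda>y. f y + t * g y) ` ?Y)"
    using Min_increases_along_minimiser_ascent[of ?Y f g]
      finite_Ybin[OF assms(1,2)] zero_in_Ybin by blast
  also have "(\<lambda>y. f y + t * g y)
      = (\<lambda>y. Lagr V P E th1 th2 y (lamstar(i := lamstar i + t * d)))"
    by (simp add: fun_eq_iff f_def g_def Lagr_shift_multiplier[OF assms(1,3)])
  finally show False
    using max[of "lamstar(i := lamstar i + t * d)"] by (simp add: Dual_def f_def)
qed

lemma ArgminL_value_in_Zset: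
  "y \<in> ArgminL V P E th1 th2 lam \<Longrightarrow> i \<in> V \<Longrightarrow> p \<in> P
     \<Longrightarrow> y i p \<in> Zset V P E th1 th2 lam i p"
  using Ybin_value by (fastforce simp: Zset_def ArgminL_def)

lemma Ybin_positive_row_has_one:
  assumes "y \<in> Ybin V P" "i \<in> V" "0 < (\<Sum>p\<in>P. y i p)"
  shows "\<exists>p\<in>P. y i p = 1"
proof -
  obtain p where "p \<in> P" "y i p \<noteq> 0"
    using assms(3) sum.neutral[of P "y i"] by (metis less_irrefl)
  then show ?thesis using Ybin_value[OF assms(1,2)] by blast
qed

lemma Ybin_row_at_most_one:
  assumes "finite P" "y \<in> Ybin V P" "i \<in> V" "(\<Sum>p\<in>P. y i p) \<le> 1"
    and "p \<in> P" "q \<in> P" "p \<noteq> q" "y i p = 1"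
  shows "y i q = 0"
proof (rule ccontr)
  assume "y i q \<noteq> 0"
  then have "y i q = 1" using Ybin_value[OF assms(2,3,6)] by blast
  then have "2 = (\<Sum>k\<in>{p, q}. y i k)" using assms(7,8) by simp
  also have "\<dots> \<le> (\<Sum>k\<in>P. y i k)"
    using assms(1,5,6) Ybin_value[OF assms(2,3)] by (intro sum_mono2) force+
  finally show False using assms(4) by simp
qed

theorem theorem2:
  fixes V :: "'v set" and P :: "'p set" and E :: "('v \<times> 'v) set"
    and th1 :: "'v \<Rightarrow> 'p \<Rightarrow> real" and th2 :: "'v \<Rightarrow> 'v \<Rightarrow> 'p \<Rightarrow> 'p \<Rightarrow> real"
    and lamstar :: "'v \<Rightarrow> real"
  assumes "finite V" and "finite P"
    and "E \<subseteq> V \<times> V"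
    and "\<And>i j. (i, j) \<in> E \<Longrightarrow> i \<noteq> j \<and> (j, i) \<notin> E"
    and "\<And>lam. Dual V P E th1 th2 lam \<le> Dual V P E th1 th2 lamstar"
  shows "weak_agreement V P E th1 th2 lamstar"
  unfolding weak_agreement_def
proof (intro ballI conjI impI)
  let ?Z = "Zset V P E th1 th2 lamstar" and ?A = "ArgminL V P E th1 th2 lamstar"
  fix i assume i: "i \<in> V"
  obtain y where y: "y \<in> ?A" "0 < (\<Sum>p\<in>P. y i p)"
    using Dual_maximiser_no_ascent_direction[OF assms(1,2) i assms(5), of "-1"] by auto
  have y_Ybin: "y \<in> Ybin V P" using y(1) by (simp add: ArgminL_def)
  obtain p where "p \<in> P" "y i p = 1"
    using Ybin_positive_row_has_one[OF y_Ybin i y(2)] by blast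
  then show "\<exists>p\<in>P. 1 \<in> ?Z i p" using ArgminL_value_in_Zset[OF y(1) i] by metis
next
  let ?Z = "Zset V P E th1 th2 lamstar" and ?A = "ArgminL V P E th1 th2 lamstar"
  fix i p q assume i: "i \<in> V" and p: "p \<in> P" and "?Z i p = {1}"
    and q: "q \<in> P" "q \<noteq> p"
  obtain y where y: "y \<in> ?A" "(\<Sum>p\<in>P. y i p) \<le> 1"
    using Dual_maximiser_no_ascent_direction[OF assms(1,2) i assms(5), of 1] by auto
  have y_Ybin: "y \<in> Ybin V P" using y(1) by (simp add: ArgminL_def)
  have "y i p = 1" using ArgminL_value_in_Zset[OF y(1) i p] \<open>?Z i p = {1}\<close> by simp
  then have "y i q = 0"
    using Ybin_row_at_most_one[OF assms(2) y_Ybin i y(2) p q(1)] q(2) by auto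
  then show "0 \<in> ?Z i q" using ArgminL_value_in_Zset[OF y(1) i q(1)] by simp
qed

end
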